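(* Let $\varepsilon>0$ and let $G=(V,E)$ be a multigraph with $|V|=s\ge 2$ vertices and $|E|=m\ge s(1+\varepsilon)$ edges. Then there exists a set $S\subseteq V$ of $|S|\le 8\log(s)\cdot\lceil 1/\varepsilon\rceil$ vertices spanning at least $|S|+1$ edges.
   Context: A multigraph is a graph that may contain parallel edges and (possibly parallel) self-loops; edges are counted with multiplicity. A set of vertices $S$ spans an edge if all endpoints of the edge lie in $S$ (a self-loop at $v$ is spanned iff $v\in S$). Logarithms are base 2. *)

theory Defs
  imports Complex_Main
begin

text \<open>A multigraph is given by a finite vertex set V, a finite set E of edge
  identifiers (so parallel edges are distinct elements of E), and an endpoint map
  ends assigning to each edge its unordered pair of endpoints, represented as an
  ordered pair; a self-loop at v has ends e = (v, v).\<close>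

definition multigraph :: "'v set \<Rightarrow> 'e set \<Rightarrow> ('e \<Rightarrow> 'v \<times> 'v) \<Rightarrow> bool" where
  "multigraph V E ends \<longleftrightarrow> finite V \<and> finite E \<and>
     (\<forall>e\<in>E. fst (ends e) \<in> V \<and> snd (ends e) \<in> V)"

definition spans :: "'v set \<Rightarrow> ('e \<Rightarrow> 'v \<times> 'v) \<Rightarrow> 'e \<Rightarrow> bool" where
  "spans S ends e \<longleftrightarrow> fst (ends e) \<in> S \<and> snd (ends e) \<in> S"

definition spanned_edges :: "'v set \<Rightarrow> 'e set \<Rightarrow> ('e \<Rightarrow> 'v \<times> 'v) \<Rightarrow> 'e set" where
  "spanned_edges S E ends = {e \<in> E. spans S ends e}"

end

(*
  Give every edge a length l e \<ge> 1, standing for a path of the original graph whose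
  interior vertices have been suppressed, and keep the invariant
  (k + 1) (|E| - |V|) \<ge> \<Sum> l with k = \<lceil>1/\<epsilon>\<rceil>; initially all lengths are 1. Deleting an
  edge longer than k, deleting a vertex meeting at most one edge, and suppressing a vertex
  of degree two (merging its two edges into one of the combined length) all preserve the
  invariant, which also keeps the graph nonempty. When no step applies, all lengths are at
  most k and all degrees at least 3. Then the balls around a vertex double in size as long
  as they span no more edges than vertices, so some ball of radius r \<le> 1 + log |V| spans
  two edges outside its breadth-first search tree; together with the tree paths from their
  endpoints to the root they form at most 4r + 1 vertices spanning one more edge. Expanding
  the suppressed paths again costs at most k - 1 vertices per edge, giving at most
  (4r + 2) k \<le> 8 k log |V| vertices once |V| \<ge> 4; smaller graphs are handled by S = V.
*)
theory Submission
  imports Defs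
begin

section \<open>Edges, degrees and balls\<close>

definition joins :: "('e \<Rightarrow> 'v \<times> 'v) \<Rightarrow> 'e \<Rightarrow> 'v \<Rightarrow> 'v \<Rightarrow> bool" where
  "joins ends e x y \<longleftrightarrow>
     (fst (ends e) = x \<and> snd (ends e) = y) \<or> (fst (ends e) = y \<and> snd (ends e) = x)"

definition other_end :: "('e \<Rightarrow> 'v \<times> 'v) \<Rightarrow> 'e \<Rightarrow> 'v \<Rightarrow> 'v" where
  "other_end ends e x = (if fst (ends e) = x then snd (ends e) else fst (ends e))"

definition incident :: "'e set \<Rightarrow> ('e \<Rightarrow> 'v \<times> 'v) \<Rightarrow> 'v \<Rightarrow> 'e set" where
  "incident E ends v = {e \<in> E. fst (ends e) = v \<or> snd (ends e) = v}"

text \<open>Self-loops count twice.\<close>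
definition degree :: "'e set \<Rightarrow> ('e \<Rightarrow> 'v \<times> 'v) \<Rightarrow> 'v \<Rightarrow> nat" where
  "degree E ends v = card {e \<in> E. fst (ends e) = v} + card {e \<in> E. snd (ends e) = v}"

definition neighbours :: "'e set \<Rightarrow> ('e \<Rightarrow> 'v \<times> 'v) \<Rightarrow> 'v set \<Rightarrow> 'v set" where
  "neighbours E ends A = {y. \<exists>e\<in>E. \<exists>x\<in>A. joins ends e x y}"

fun ball :: "'e set \<Rightarrow> ('e \<Rightarrow> 'v \<times> 'v) \<Rightarrow> 'v \<Rightarrow> nat \<Rightarrow> 'v set" where
  "ball E ends v 0 = {v}"
| "ball E ends v (Suc n) = ball E ends v n \<union> neighbours E ends (ball E ends v n)"

lemma joins_other_end:
  assumes "fst (ends e) = x \<or> snd (ends e) = x"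
  shows "joins ends e x (other_end ends e x)"
  using assms by (auto simp: joins_def other_end_def)

lemma other_end_joins:
  assumes "joins ends e x y"
  shows "other_end ends e y = x"
  using assms by (auto simp: joins_def other_end_def)

lemma joins_eq:
  assumes "joins ends e x y" "joins ends e x' y'" "y \<noteq> y'"
  shows "x = y' \<and> x' = y"
  using assms by (auto simp: joins_def)

lemma spans_iff_joins:
  assumes "joins ends e x y"
  shows "spans S ends e \<longleftrightarrow> x \<in> S \<and> y \<in> S"
  using assms by (auto simp: joins_def spans_def)

lemma card_preimage_eq_sum_fibres:
  assumes "finite E" "finite A"
  shows "card {e \<in> E. f e \<in> A} = (\<Sum>u\<in>A. card {e \<in> E. f e = u})"
proof -
  have "{e \<in> E. f e \<in> A} = (\<Union>u\<in>A. {e \<in> E. f e = u})" by auto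
  also have "card \<dots> = (\<Sum>u\<in>A. card {e \<in> E. f e = u})"
    by (rule card_UN_disjoint) (use assms in auto)
  finally show ?thesis .
qed

lemma degree_eq_card_incident:
  assumes "finite E"
  shows "degree E ends v = card (incident E ends v) + card {e \<in> E. ends e = (v, v)}"
proof -
  have "degree E ends v
      = card ({e \<in> E. fst (ends e) = v} \<union> {e \<in> E. snd (ends e) = v})
        + card ({e \<in> E. fst (ends e) = v} \<inter> {e \<in> E. snd (ends e) = v})"
    unfolding degree_def by (rule card_Un_Int) (use assms in auto)
  moreover have "{e \<in> E. fst (ends e) = v} \<inter> {e \<in> E. snd (ends e) = v} = {e \<in> E. ends e = (v, v)}"
    by (auto simp: prod_eq_iff)
  ultimately show ?thesis
    by (simp add: incident_def Collect_disj_eq[symmetric] conj_disj_distribL)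
qed

lemma sum_degree_le_spanned:
  assumes "finite E" "finite A"
  shows "(\<Sum>u\<in>A. degree E ends u)
           \<le> card (spanned_edges A E ends) + card (spanned_edges (A \<union> neighbours E ends A) E ends)"
proof -
  let ?X = "{e \<in> E. fst (ends e) \<in> A}" and ?Y = "{e \<in> E. snd (ends e) \<in> A}"
  have "(\<Sum>u\<in>A. degree E ends u) = card ?X + card ?Y"
    using card_preimage_eq_sum_fibres[OF assms, of "\<lambda>e. fst (ends e)"]
      card_preimage_eq_sum_fibres[OF assms, of "\<lambda>e. snd (ends e)"]
    by (simp add: degree_def sum.distrib)
  also have "\<dots> = card (?X \<union> ?Y) + card (?X \<inter> ?Y)"
    by (rule card_Un_Int) (use assms in auto)
  also have "?X \<inter> ?Y = spanned_edges A E ends"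
    by (auto simp: spanned_edges_def spans_def)
  also have "card (?X \<union> ?Y) \<le> card (spanned_edges (A \<union> neighbours E ends A) E ends)"
    by (rule card_mono)
      (auto simp: spanned_edges_def spans_def neighbours_def joins_def assms)
  finally show ?thesis by simp
qed

section \<open>Breadth-first search in graphs of minimum degree three\<close>

locale min_degree_three =
  fixes V :: "'v set" and E :: "'e set" and ends :: "'e \<Rightarrow> 'v \<times> 'v" and root :: 'v
  assumes graph: "multigraph V E ends"
    and root_in_V: "root \<in> V"
    and degree_ge_3: "\<forall>u\<in>V. 3 \<le> degree E ends u"
begin

abbreviation B :: "nat \<Rightarrow> 'v set" where "B \<equiv> ball E ends root"
abbreviation sp :: "'v set \<Rightarrow> 'e set" where "sp A \<equiv> spanned_edges A E ends"

lemma finite_V: "finite V" and finite_E: "finite E"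
  and ends_in_V: "e \<in> E \<Longrightarrow> fst (ends e) \<in> V \<and> snd (ends e) \<in> V"
  using graph by (auto simp: multigraph_def)

lemma ball_subset_V: "B n \<subseteq> V"
  by (induction n) (auto simp: neighbours_def joins_def root_in_V dest: ends_in_V)

lemma finite_ball: "finite (B n)"
  using ball_subset_V finite_V by (rule finite_subset)

lemma ball_mono: "m \<le> n \<Longrightarrow> B m \<subseteq> B n"
  by (induction n) (auto simp: le_Suc_eq)

lemma root_in_ball: "root \<in> B n"
  using ball_mono[of 0 n] by auto

lemma finite_sp: "finite (sp A)"
  using finite_E by (simp add: spanned_edges_def)

text \<open>Every vertex of \<open>B j\<close> contributes three edge ends, all on edges spanned by \<open>B j\<close>
  or \<open>B (Suc j)\<close>.\<close>
lemma ball_doubles: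
  assumes "card (sp (B j)) \<le> card (B j)" "card (sp (B (Suc j))) \<le> card (B (Suc j))"
  shows "2 * card (B j) \<le> card (B (Suc j))"
proof -
  have "3 * card (B j) = (\<Sum>u\<in>B j. 3)" by simp
  also have "\<dots> \<le> (\<Sum>u\<in>B j. degree E ends u)"
    by (rule sum_mono) (use degree_ge_3 ball_subset_V in auto)
  also have "\<dots> \<le> card (sp (B j)) + card (sp (B (Suc j)))"
    using sum_degree_le_spanned[OF finite_E finite_ball] by simp
  finally show ?thesis using assms by simp
qed

lemma two_power_le_card_ball:
  assumes "\<forall>i\<le>j. card (sp (B i)) \<le> card (B i)"
  shows "2 ^ j \<le> card (B j)"
  using assms
proof (induction j)
  case (Suc j)
  then have "2 ^ j \<le> card (B j)" by simp
  moreover have "2 * card (B j) \<le> card (B (Suc j))"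
    by (rule ball_doubles) (use Suc.prems in auto)
  ultimately show ?case by simp
qed simp

lemma dense_ball_exists:
  obtains r where "card (B r) < card (sp (B r))" "2 ^ r \<le> 2 * card V"
proof -
  have card_B_le: "card (B n) \<le> card V" for n
    by (rule card_mono[OF finite_V ball_subset_V])
  have "\<exists>i. card (B i) < card (sp (B i))"
  proof (rule ccontr)
    assume "\<nexists>i. card (B i) < card (sp (B i))"
    then have "2 ^ card V \<le> card (B (card V))"
      by (intro two_power_le_card_ball) (auto simp: not_less)
    with card_B_le[of "card V"] show False
      using less_exp[of "card V"] by simp
  qed
  define r where "r = (LEAST i. card (B i) < card (sp (B i)))"
  have dense: "card (B r) < card (sp (B r))"
    unfolding r_def by (rule LeastI_ex) fact
  have sparse_below: "card (sp (B i)) \<le> card (B i)" if "i < r" for i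
    using not_less_Least[of i "\<lambda>i. card (B i) < card (sp (B i))"] that
    unfolding r_def by (simp add: not_less)
  have "2 ^ r \<le> 2 * card V"
  proof (cases r)
    case 0
    then show ?thesis using root_in_V finite_V by (auto simp: Suc_le_eq card_gt_0_iff)
  next
    case (Suc q)
    have "2 ^ q \<le> card (B q)"
      by (rule two_power_le_card_ball) (use sparse_below Suc in auto)
    with card_B_le[of q] Suc show ?thesis by simp
  qed
  with dense that show ?thesis by blast
qed

definition reached :: "'v \<Rightarrow> bool" where
  "reached u \<longleftrightarrow> (\<exists>n. u \<in> B n)"

definition depth :: "'v \<Rightarrow> nat" where
  "depth u = (LEAST n. u \<in> B n)"

lemma reachedI: "u \<in> B n \<Longrightarrow> reached u"
  unfolding reached_def by blast

lemma in_ball_depth: "reached u \<Longrightarrow> u \<in> B (depth u)"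
  unfolding reached_def depth_def by (rule LeastI_ex)

lemma depth_le: "u \<in> B n \<Longrightarrow> depth u \<le> n"
  unfolding depth_def by (rule Least_le)

lemma in_ball_iff_depth_le: "u \<in> B n \<longleftrightarrow> reached u \<and> depth u \<le> n"
  using in_ball_depth depth_le ball_mono reachedI by blast

lemma depth_eq_0_iff: "reached u \<Longrightarrow> depth u = 0 \<longleftrightarrow> u = root"
  using in_ball_depth depth_le[of root 0] by fastforce

definition parent_edge :: "'v \<Rightarrow> 'e" where
  "parent_edge u = (SOME e. e \<in> E \<and> (\<exists>p\<in>B (depth u - 1). joins ends e p u))"

definition parent :: "'v \<Rightarrow> 'v" where
  "parent u = other_end ends (parent_edge u) u"

lemma parent_edge_joins:
  assumes "reached u" "0 < depth u"
  shows "parent_edge u \<in> E \<and> parent u \<in> B (depth u - 1) \<and> joins ends (parent_edge u) (parent u) u"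
proof -
  obtain n where n: "depth u = Suc n"
    using assms(2) gr0_conv_Suc by blast
  have "u \<in> B (Suc n)" "u \<notin> B n"
    using in_ball_depth[OF assms(1)] depth_le[of u n] n by auto
  then have "\<exists>e. e \<in> E \<and> (\<exists>p\<in>B (depth u - 1). joins ends e p u)"
    using n by (auto simp: neighbours_def)
  then have "parent_edge u \<in> E \<and> (\<exists>p\<in>B (depth u - 1). joins ends (parent_edge u) p u)"
    unfolding parent_edge_def by (rule someI_ex)
  then show ?thesis
    unfolding parent_def using other_end_joins by metis
qed

lemma depth_parent:
  assumes "reached u" "0 < depth u"
  shows "reached (parent u) \<and> depth (parent u) = depth u - 1"
proof -
  have p: "parent u \<in> B (depth u - 1)" and e: "parent_edge u \<in> E"
    and j: "joins ends (parent_edge u) (parent u) u"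
    using parent_edge_joins[OF assms] by auto
  have reached_p: "reached (parent u)"
    using p by (rule reachedI)
  have "u \<in> B (Suc (depth (parent u)))"
    using in_ball_depth[OF reached_p] e j by (auto simp: neighbours_def)
  then have "depth u \<le> Suc (depth (parent u))"
    by (rule depth_le)
  with depth_le[OF p] reached_p show ?thesis by simp
qed

lemma inj_on_parent_edge: "inj_on parent_edge {u. reached u \<and> 0 < depth u}"
proof (rule inj_onI, rule ccontr)
  fix x y
  assume x: "x \<in> {u. reached u \<and> 0 < depth u}" and y: "y \<in> {u. reached u \<and> 0 < depth u}"
    and eq: "parent_edge x = parent_edge y" and "x \<noteq> y"
  have jx: "joins ends (parent_edge x) (parent x) x" and jy: "joins ends (parent_edge y) (parent y) y"
    using parent_edge_joins x y by simp_all
  have "parent x = y \<and> parent y = x"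
    using joins_eq[OF jx jy[folded eq] \<open>x \<noteq> y\<close>] .
  moreover have "depth (parent x) < depth x" "depth (parent y) < depth y"
    using depth_parent x y by auto
  ultimately show False by simp
qed

definition ancestors :: "'v \<Rightarrow> 'v set" where
  "ancestors u = (\<lambda>i. (parent ^^ i) u) ` {..depth u}"

lemma depth_funpow_parent:
  assumes "reached u" "i \<le> depth u"
  shows "reached ((parent ^^ i) u) \<and> depth ((parent ^^ i) u) = depth u - i"
  using assms(2)
proof (induction i)
  case (Suc i)
  then show ?case
    using depth_parent[of "(parent ^^ i) u"] by simp
qed (use assms(1) in simp)

lemma self_in_ancestors: "u \<in> ancestors u"
  unfolding ancestors_def by force

lemma root_in_ancestors: "reached u \<Longrightarrow> root \<in> ancestors u"
  unfolding ancestors_def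
  using depth_funpow_parent[of u "depth u"] depth_eq_0_iff by force

lemma ancestors_subset_ball:
  assumes "u \<in> B n"
  shows "ancestors u \<subseteq> B n"
proof -
  have "reached u" "depth u \<le> n"
    using assms by (simp_all add: in_ball_iff_depth_le)
  then show ?thesis
    unfolding ancestors_def using depth_funpow_parent by (auto simp: in_ball_iff_depth_le)
qed

lemma parent_in_ancestors:
  assumes "reached u" "x \<in> ancestors u" "0 < depth x"
  shows "parent x \<in> ancestors u"
proof -
  obtain i where i: "i \<le> depth u" "x = (parent ^^ i) u"
    using assms(2) unfolding ancestors_def by blast
  then have "Suc i \<le> depth u"
    using depth_funpow_parent[OF assms(1) i(1)] assms(3) by simp
  then show ?thesis
    unfolding ancestors_def using i(2) by (auto intro!: image_eqI[of _ _ "Suc i"])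
qed

lemma card_ancestors: "card (ancestors u) \<le> Suc (depth u)"
  unfolding ancestors_def using card_image_le[of "{..depth u}"] by simp

lemma tree_edges_spanned:
  assumes "S \<subseteq> B r" "root \<in> S" "\<forall>x\<in>S. 0 < depth x \<longrightarrow> parent x \<in> S"
  shows "parent_edge ` (S - {root}) \<subseteq> sp S"
    and "card (parent_edge ` (S - {root})) = card S - 1"
proof -
  have non_root: "reached x \<and> 0 < depth x" if "x \<in> S - {root}" for x
  proof -
    have "reached x"
      using that assms(1) in_ball_iff_depth_le by blast
    with that show ?thesis
      using depth_eq_0_iff by blast
  qed
  show "parent_edge ` (S - {root}) \<subseteq> sp S"
  proof
    fix e assume "e \<in> parent_edge ` (S - {root})"
    then obtain x where x: "x \<in> S - {root}" "e = parent_edge x" by blast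
    with non_root[OF x(1)] assms(3) show "e \<in> sp S"
      using parent_edge_joins[of x] by (auto simp: spanned_edges_def spans_iff_joins)
  qed
  have "inj_on parent_edge (S - {root})"
    using inj_on_parent_edge by (rule inj_on_subset) (use non_root in blast)
  moreover have "finite S"
    using assms(1) finite_ball by (rule finite_subset)
  ultimately show "card (parent_edge ` (S - {root})) = card S - 1"
    using assms(2) by (simp add: card_image)
qed

lemma card_Union_ancestors:
  assumes "finite X" "X \<subseteq> B r"
  shows "card (\<Union>x\<in>X. ancestors x) \<le> card X * r + 1"
proof -
  have reached: "reached x" and depth: "depth x \<le> r" if "x \<in> X" for x
    using that assms(2) by (auto simp: in_ball_iff_depth_le)
  have "card (\<Union>x\<in>X. ancestors x) \<le> card (insert root (\<Union>x\<in>X. ancestors x - {root}))"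
    by (rule card_mono) (auto simp: assms(1) ancestors_def)
  also have "\<dots> = card (\<Union>x\<in>X. ancestors x - {root}) + 1"
    using card_insert_disjoint[of "\<Union>x\<in>X. ancestors x - {root}" root] assms(1)
    by (simp add: ancestors_def)
  also have "card (\<Union>x\<in>X. ancestors x - {root}) \<le> (\<Sum>x\<in>X. card (ancestors x - {root}))"
    by (rule card_UN_le) fact
  also have "\<dots> \<le> (\<Sum>x\<in>X. r)"
  proof (rule sum_mono)
    fix x assume "x \<in> X"
    then show "card (ancestors x - {root}) \<le> r"
      using card_ancestors[of x] root_in_ancestors[OF reached] depth[of x]
      by (simp add: ancestors_def)
  qed
  finally show ?thesis by simp
qed

text \<open>The tree has \<open>card (B r) - 1\<close> edges, and the ball spans more than \<open>card (B r)\<close>.\<close>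
lemma two_non_tree_edges:
  obtains r f\<^sub>1 f\<^sub>2 where "f\<^sub>1 \<in> sp (B r)" "f\<^sub>2 \<in> sp (B r)" "f\<^sub>1 \<noteq> f\<^sub>2"
    "f\<^sub>1 \<notin> parent_edge ` (B r - {root})" "f\<^sub>2 \<notin> parent_edge ` (B r - {root})"
    "2 ^ r \<le> 2 * card V"
proof -
  obtain r where dense: "card (B r) < card (sp (B r))" and r: "2 ^ r \<le> 2 * card V"
    by (rule dense_ball_exists)
  define T where "T = parent_edge ` (B r - {root})"
  have closed: "\<forall>x\<in>B r. 0 < depth x \<longrightarrow> parent x \<in> B r"
    using depth_parent by (auto simp: in_ball_iff_depth_le)
  have T: "T \<subseteq> sp (B r)" "card T = card (B r) - 1"
    unfolding T_def using tree_edges_spanned[OF order.refl root_in_ball closed] by auto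
  have "card (sp (B r) - T) = card (sp (B r)) - card T"
    using T(1) finite_sp by (simp add: card_Diff_subset finite_subset)
  moreover have "0 < card (B r)"
    using root_in_ball finite_ball card_gt_0_iff by blast
  ultimately have "2 \<le> card (sp (B r) - T)"
    using dense T(2) by linarith
  then obtain P where "P \<subseteq> sp (B r) - T" "card P = 2"
    by (rule obtain_subset_with_card_n)
  then obtain f\<^sub>1 f\<^sub>2 where "f\<^sub>1 \<in> sp (B r) - T" "f\<^sub>2 \<in> sp (B r) - T" "f\<^sub>1 \<noteq> f\<^sub>2"
    by (auto simp: card_2_iff)
  with r that show ?thesis unfolding T_def by blast
qed

text \<open>Two non-tree edges together with the tree paths from their endpoints to the root
  give a subgraph with one more edge than vertices.\<close>
lemma exists_short_dense_subgraph:
  obtains S F r where "S \<subseteq> V" "F \<subseteq> sp S" "card F = card S + 1" "card S \<le> 4 * r + 1"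
    "2 ^ r \<le> 2 * card V"
proof -
  obtain r f\<^sub>1 f\<^sub>2 where f: "f\<^sub>1 \<in> sp (B r)" "f\<^sub>2 \<in> sp (B r)" "f\<^sub>1 \<noteq> f\<^sub>2"
    "f\<^sub>1 \<notin> parent_edge ` (B r - {root})" "f\<^sub>2 \<notin> parent_edge ` (B r - {root})"
    and r: "2 ^ r \<le> 2 * card V"
    by (rule two_non_tree_edges)
  define X where "X = {fst (ends f\<^sub>1), snd (ends f\<^sub>1), fst (ends f\<^sub>2), snd (ends f\<^sub>2)}"
  define S where "S = (\<Union>x\<in>X. ancestors x)"
  define F where "F = insert f\<^sub>1 (insert f\<^sub>2 (parent_edge ` (S - {root})))"
  have X: "X \<subseteq> B r"
    using f(1,2) by (auto simp: X_def spanned_edges_def spans_def)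
  then have reached: "reached x" if "x \<in> X" for x
    using that by (auto simp: in_ball_iff_depth_le)
  have S_ball: "S \<subseteq> B r"
    unfolding S_def using X ancestors_subset_ball by blast
  have root: "root \<in> S"
    using root_in_ancestors[OF reached, of "fst (ends f\<^sub>1)"] by (auto simp: S_def X_def)
  have closed: "\<forall>x\<in>S. 0 < depth x \<longrightarrow> parent x \<in> S"
    unfolding S_def using parent_in_ancestors reached by blast
  note tree = tree_edges_spanned[OF S_ball root closed]
  have "parent_edge ` (S - {root}) \<subseteq> parent_edge ` (B r - {root})"
    using S_ball by blast
  with f(4,5) have fresh: "f\<^sub>1 \<notin> parent_edge ` (S - {root})" "f\<^sub>2 \<notin> parent_edge ` (S - {root})"
    by blast+
  have "finite S"
    using S_ball finite_ball by (rule finite_subset)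
  with root have "0 < card S"
    using card_gt_0_iff by blast
  then have "card F = card S + 1"
    using tree(2) fresh f(3) \<open>finite S\<close> by (simp add: F_def)
  moreover have "X \<subseteq> S"
    unfolding S_def using self_in_ancestors by blast
  then have "F \<subseteq> sp S"
    using tree(1) f(1,2) by (auto simp: F_def X_def spanned_edges_def spans_def)
  moreover have "finite X" "card X * r \<le> 4 * r"
    using card_length[of "[fst (ends f\<^sub>1), snd (ends f\<^sub>1), fst (ends f\<^sub>2), snd (ends f\<^sub>2)]"]
    by (simp_all add: X_def)
  then have "card S \<le> 4 * r + 1"
    using card_Union_ancestors[of X r] X unfolding S_def by linarith
  moreover have "S \<subseteq> V"
    using S_ball ball_subset_V by blast
  ultimately show ?thesis using r that by blast
qed

end

section \<open>Reducing graphs with edge lengths\<close>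

text \<open>An edge \<open>e\<close> of length \<open>l e\<close> stands for a path of \<open>l e\<close> edges of the original graph.
  For unit lengths the last condition reads \<open>k |E| \<ge> (k + 1) |V|\<close>.\<close>
definition dense_weighted :: "'v set \<Rightarrow> 'e set \<Rightarrow> ('e \<Rightarrow> 'v \<times> 'v) \<Rightarrow> ('e \<Rightarrow> nat) \<Rightarrow> nat \<Rightarrow> bool" where
  "dense_weighted V E ends l k \<longleftrightarrow> multigraph V E ends \<and> V \<noteq> {} \<and> (\<forall>e\<in>E. 1 \<le> l e) \<and>
     (k + 1) * card V + sum l E \<le> (k + 1) * card E"

text \<open>Expanding each edge of \<open>F\<close> into its path adds \<open>l e - 1\<close> vertices and as many edges,
  so \<open>card S + (\<Sum>e\<in>F. l e - 1)\<close> is the size of the expanded subgraph.\<close>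
definition has_short_dense_subgraph ::
    "'v set \<Rightarrow> 'e set \<Rightarrow> ('e \<Rightarrow> 'v \<times> 'v) \<Rightarrow> ('e \<Rightarrow> nat) \<Rightarrow> nat \<Rightarrow> bool" where
  "has_short_dense_subgraph V E ends l k \<longleftrightarrow> (\<exists>S F r. S \<subseteq> V \<and> F \<subseteq> spanned_edges S E ends \<and>
     card S < card F \<and> card S + (\<Sum>e\<in>F. l e - 1) \<le> k * (4 * r + 2) \<and> 2 ^ r \<le> 2 * card V)"

lemma spanned_edges_all: "multigraph V E ends \<Longrightarrow> spanned_edges V E ends = E"
  by (auto simp: multigraph_def spanned_edges_def spans_def)

lemma multigraph_subset_edges: "multigraph V E ends \<Longrightarrow> E' \<subseteq> E \<Longrightarrow> multigraph V E' ends"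
  by (auto simp: multigraph_def intro: finite_subset)

lemma multigraph_remove_vertex:
  "multigraph V E ends \<Longrightarrow> multigraph (V - {v}) (E - incident E ends v) ends"
  by (auto simp: multigraph_def incident_def)

lemma has_short_dense_subgraph_mono:
  assumes "has_short_dense_subgraph V E ends l k" "V \<subseteq> V'" "E \<subseteq> E'" "finite V'"
  shows "has_short_dense_subgraph V' E' ends l k"
proof -
  have "card V \<le> card V'"
    using assms(2,4) by (rule card_mono[rotated])
  moreover have "spanned_edges S E ends \<subseteq> spanned_edges S E' ends" for S
    using assms(3) by (auto simp: spanned_edges_def)
  ultimately show ?thesis
    using assms(1,2) unfolding has_short_dense_subgraph_def by (meson order.trans mult_le_mono2)
qed

lemma dense_weighted_remove_edge:
  assumes dense: "dense_weighted V E ends l k" and e: "e \<in> E" "k < l e"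
  shows "dense_weighted V (E - {e}) ends l k"
proof -
  have graph: "multigraph V E ends"
    and inv: "(k + 1) * card V + sum l E \<le> (k + 1) * card E"
    using dense by (simp_all add: dense_weighted_def)
  then have "finite E"
    by (simp add: multigraph_def)
  then have "sum l E = l e + sum l (E - {e})" "card E = card (E - {e}) + 1"
    using sum.remove[of E e l] card_Suc_Diff1[of E e] e(1) by simp_all
  with inv e(2) have "(k + 1) * card V + sum l (E - {e}) \<le> (k + 1) * card (E - {e})"
    by simp
  moreover have "multigraph V (E - {e}) ends"
    using graph by (rule multigraph_subset_edges) blast
  ultimately show ?thesis
    using dense by (simp add: dense_weighted_def)
qed

lemma dense_weighted_remove_vertex:
  assumes dense: "dense_weighted V E ends l k" and v: "v \<in> V" and low: "card (incident E ends v) \<le> 1"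
  shows "dense_weighted (V - {v}) (E - incident E ends v) ends l k"
proof -
  define I where "I = incident E ends v"
  have graph: "multigraph V E ends" and pos: "\<forall>e\<in>E. 1 \<le> l e"
    and inv: "(k + 1) * card V + sum l E \<le> (k + 1) * card E"
    using dense by (auto simp: dense_weighted_def)
  then have fin: "finite V" "finite E"
    by (auto simp: multigraph_def)
  have I: "I \<subseteq> E" "finite I"
    using fin by (auto simp: I_def incident_def)
  have sum_E: "sum l E = sum l I + sum l (E - I)"
    using sum.subset_diff[OF I(1) fin(2), of l] by linarith
  have "card E = card I + card (E - I)"
    using card_Diff_subset[OF I(2,1)] card_mono[OF fin(2) I(1)] by arith
  then have card_E: "(k + 1) * card E = (k + 1) * card I + (k + 1) * card (E - I)"
    by (simp add: add_mult_distrib2)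
  have "card V = card (V - {v}) + 1"
    using card_Suc_Diff1[OF fin(1) v] by linarith
  then have card_V: "(k + 1) * card V = (k + 1) * card (V - {v}) + (k + 1)"
    by simp
  have "card I \<le> sum l I"
    using sum_mono[of I "\<lambda>_. 1" l] pos I(1) by auto
  moreover have "(k + 1) * card I \<le> k + 1"
    using mult_le_mono2[OF low, of "k + 1"] by (simp add: I_def)
  ultimately have "(k + 1) * card (V - {v}) + sum l (E - I) \<le> (k + 1) * card (E - I)"
    using inv sum_E card_E card_V by linarith
  moreover have "V - {v} \<noteq> {}"
  proof
    assume no_vertex_left: "V - {v} = {}"
    then have "E - I = {}"
      using graph by (auto simp: I_def incident_def multigraph_def)
    with no_vertex_left have "card (V - {v}) = 0" "card (E - I) = 0"
      by (simp_all only: card.empty)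
    then have "k + 1 + sum l I \<le> (k + 1) * card I"
      using inv unfolding sum_E card_E card_V by simp
    then show False
      using \<open>card I \<le> sum l I\<close> low by (cases "card I") (auto simp: I_def)
  qed
  moreover have "multigraph (V - {v}) (E - I) ends"
    unfolding I_def using graph by (rule multigraph_remove_vertex)
  ultimately show ?thesis
    using pos by (auto simp: dense_weighted_def I_def)
qed

lemma sum_fun_upd_remove:
  assumes "finite A" "a \<in> A"
  shows "sum (f(a := x)) A = x + sum f (A - {a})"
  using assms by (simp add: sum.remove)

text \<open>Vertices and edges each drop by one and the total length is unchanged.\<close>
lemma dense_weighted_suppress:
  assumes dense: "dense_weighted V E ends l k" and v: "v \<in> V"
    and incident: "incident E ends v = {e\<^sub>1, e\<^sub>2}" "e\<^sub>1 \<noteq> e\<^sub>2"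
    and u: "joins ends e\<^sub>1 v u" "u \<noteq> v" and w: "joins ends e\<^sub>2 v w" "w \<noteq> v"
  shows "dense_weighted (V - {v}) (E - {e\<^sub>2}) (ends(e\<^sub>1 := (u, w))) (l(e\<^sub>1 := l e\<^sub>1 + l e\<^sub>2)) k"
proof -
  have graph: "multigraph V E ends" and pos: "\<forall>e\<in>E. 1 \<le> l e"
    and inv: "(k + 1) * card V + sum l E \<le> (k + 1) * card E"
    using dense by (auto simp: dense_weighted_def)
  then have fin: "finite V" "finite E"
    by (auto simp: multigraph_def)
  have e: "e\<^sub>1 \<in> E - {e\<^sub>2}" "e\<^sub>2 \<in> E"
    using incident by (auto simp: incident_def)
  have uw: "u \<in> V - {v}" "w \<in> V - {v}"
    using u w e graph by (auto simp: joins_def multigraph_def)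
  have "sum (l(e\<^sub>1 := l e\<^sub>1 + l e\<^sub>2)) (E - {e\<^sub>2}) = l e\<^sub>2 + (l e\<^sub>1 + sum l (E - {e\<^sub>2} - {e\<^sub>1}))"
    by (subst sum_fun_upd_remove) (use fin e in simp_all)
  also have "\<dots> = sum l E"
    using fin e by (simp add: sum.remove)
  finally have sum_eq: "sum (l(e\<^sub>1 := l e\<^sub>1 + l e\<^sub>2)) (E - {e\<^sub>2}) = sum l E" .
  have "card E = card (E - {e\<^sub>2}) + 1" "card V = card (V - {v}) + 1"
    using card_Suc_Diff1[OF fin(2) e(2)] card_Suc_Diff1[OF fin(1) v] by linarith+
  with inv sum_eq have "(k + 1) * card (V - {v}) + sum (l(e\<^sub>1 := l e\<^sub>1 + l e\<^sub>2)) (E - {e\<^sub>2})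
      \<le> (k + 1) * card (E - {e\<^sub>2})"
    by simp
  moreover have "fst (ends e) \<noteq> v \<and> snd (ends e) \<noteq> v" if "e \<in> E - {e\<^sub>1, e\<^sub>2}" for e
    using that incident by (auto simp: incident_def)
  then have "multigraph (V - {v}) (E - {e\<^sub>2}) (ends(e\<^sub>1 := (u, w)))"
    using graph uw by (auto simp: multigraph_def)
  ultimately show ?thesis
    using pos uw by (auto simp: dense_weighted_def)
qed

lemma sum_merged_lengths:
  fixes l :: "'e \<Rightarrow> nat"
  assumes "finite F" "e\<^sub>1 \<in> F" "e\<^sub>2 \<notin> F" "1 \<le> l e\<^sub>1" "1 \<le> l e\<^sub>2"
  shows "(\<Sum>e\<in>insert e\<^sub>2 F. l e - 1) + 1 = (\<Sum>e\<in>F. (l(e\<^sub>1 := l e\<^sub>1 + l e\<^sub>2)) e - 1)"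
proof -
  have "(\<Sum>e\<in>insert e\<^sub>2 F. l e - 1) = (l e\<^sub>2 - 1) + (l e\<^sub>1 - 1) + (\<Sum>e\<in>F - {e\<^sub>1}. l e - 1)"
    using assms(1-3) by (simp add: sum.remove)
  moreover have "(\<Sum>e\<in>F. (l(e\<^sub>1 := l e\<^sub>1 + l e\<^sub>2)) e - 1) = (l e\<^sub>1 + l e\<^sub>2 - 1) + (\<Sum>e\<in>F - {e\<^sub>1}. l e - 1)"
    using assms(1,2) sum_fun_upd_remove[of F e\<^sub>1 "\<lambda>e. l e - 1"] by (simp add: sum.remove)
  ultimately show ?thesis
    using assms(4,5) by simp
qed

lemma has_short_dense_subgraph_unsuppress:
  assumes dense: "dense_weighted V E ends l k" and v: "v \<in> V"
    and incident: "incident E ends v = {e\<^sub>1, e\<^sub>2}" "e\<^sub>1 \<noteq> e\<^sub>2"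
    and u: "joins ends e\<^sub>1 v u" and w: "joins ends e\<^sub>2 v w"
    and suppressed: "has_short_dense_subgraph (V - {v}) (E - {e\<^sub>2})
                       (ends(e\<^sub>1 := (u, w))) (l(e\<^sub>1 := l e\<^sub>1 + l e\<^sub>2)) k"
  shows "has_short_dense_subgraph V E ends l k"
proof -
  let ?ends = "ends(e\<^sub>1 := (u, w))" and ?l = "l(e\<^sub>1 := l e\<^sub>1 + l e\<^sub>2)"
  have fin: "finite V" "finite E" and pos: "\<forall>e\<in>E. 1 \<le> l e"
    using dense by (auto simp: dense_weighted_def multigraph_def)
  have e: "e\<^sub>1 \<in> E" "e\<^sub>2 \<in> E"
    using incident by (auto simp: incident_def)
  obtain S F r where S: "S \<subseteq> V - {v}" and F: "F \<subseteq> spanned_edges S (E - {e\<^sub>2}) ?ends"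
    and dense_F: "card S < card F" and cost: "card S + (\<Sum>e\<in>F. ?l e - 1) \<le> k * (4 * r + 2)"
    and r: "2 ^ r \<le> 2 * card (V - {v})"
    using suppressed unfolding has_short_dense_subgraph_def by blast
  have fin_F: "finite F"
    using F fin(2) by (auto simp: spanned_edges_def intro: finite_subset)
  show ?thesis
  proof (cases "e\<^sub>1 \<in> F")
    case False
    have "F \<subseteq> spanned_edges S E ends"
    proof
      fix e assume "e \<in> F"
      with F False have "e \<noteq> e\<^sub>1" "e \<in> spanned_edges S (E - {e\<^sub>2}) ?ends"
        by auto
      then show "e \<in> spanned_edges S E ends"
        by (simp add: spanned_edges_def spans_def)
    qed
    moreover have "(\<Sum>e\<in>F. ?l e - 1) = (\<Sum>e\<in>F. l e - 1)"
      using False by (intro sum.cong) auto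
    ultimately have "has_short_dense_subgraph (V - {v}) E ends l k"
      unfolding has_short_dense_subgraph_def using S dense_F cost r by auto
    then show ?thesis
      by (rule has_short_dense_subgraph_mono) (use fin in auto)
  next
    case True
    have "e\<^sub>2 \<notin> F" "v \<notin> S" "finite S"
      using F S fin(1) by (auto simp: spanned_edges_def intro: finite_subset)
    then have card: "card (insert v S) = card S + 1" "card (insert e\<^sub>2 F) = card F + 1"
      using fin_F by simp_all
    have "u \<in> S" "w \<in> S"
      using F True by (auto simp: spanned_edges_def spans_def)
    then have "insert e\<^sub>2 F \<subseteq> spanned_edges (insert v S) E ends"
      using F e u w by (auto simp: spanned_edges_def spans_def joins_def split: if_splits)
    moreover have "card (insert v S) + (\<Sum>e\<in>insert e\<^sub>2 F. l e - 1) = card S + (\<Sum>e\<in>F. ?l e - 1)"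
      using sum_merged_lengths[OF fin_F True \<open>e\<^sub>2 \<notin> F\<close>] pos e card(1) by simp
    moreover have "2 ^ r \<le> 2 * card V"
      using r card_mono[OF fin(1), of "V - {v}"] by auto
    ultimately show ?thesis
      unfolding has_short_dense_subgraph_def using S v dense_F cost card
      by (intro exI[of _ "insert v S"] exI[of _ "insert e\<^sub>2 F"] exI[of _ r]) auto
  qed
qed

lemma path_vertex_if_degree_less_3:
  assumes "finite E" "2 \<le> card (incident E ends v)" "degree E ends v < 3"
  obtains e\<^sub>1 e\<^sub>2 u w where "incident E ends v = {e\<^sub>1, e\<^sub>2}" "e\<^sub>1 \<noteq> e\<^sub>2"
    "joins ends e\<^sub>1 v u" "u \<noteq> v" "joins ends e\<^sub>2 v w" "w \<noteq> v"
proof -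
  have "card (incident E ends v) = 2" "card {e \<in> E. ends e = (v, v)} = 0"
    using degree_eq_card_incident[OF assms(1), of ends v] assms(2,3) by linarith+
  then have I: "\<exists>e\<^sub>1 e\<^sub>2. incident E ends v = {e\<^sub>1, e\<^sub>2} \<and> e\<^sub>1 \<noteq> e\<^sub>2" and no_loop: "\<forall>e\<in>E. ends e \<noteq> (v, v)"
    using assms(1) by (auto simp: card_2_iff)
  have "joins ends e v (other_end ends e v) \<and> other_end ends e v \<noteq> v" if "e \<in> incident E ends v" for e
    using that no_loop joins_other_end[of ends e v]
    by (auto simp: incident_def other_end_def prod_eq_iff)
  with I that show ?thesis
    by blast
qed

lemma reduction_cases:
  fixes l :: "'e \<Rightarrow> nat"
  assumes "finite E"
  obtains (long_edge) e where "e \<in> E" "k < l e"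
  | (low_vertex) v where "v \<in> V" "card (incident E ends v) \<le> 1"
  | (path_vertex) v e\<^sub>1 e\<^sub>2 u w where "v \<in> V" "incident E ends v = {e\<^sub>1, e\<^sub>2}" "e\<^sub>1 \<noteq> e\<^sub>2"
      "joins ends e\<^sub>1 v u" "u \<noteq> v" "joins ends e\<^sub>2 v w" "w \<noteq> v"
  | (reduced) "\<forall>e\<in>E. l e \<le> k" "\<forall>v\<in>V. 3 \<le> degree E ends v"
proof (cases "\<exists>e\<in>E. k < l e")
  case True
  then show ?thesis using long_edge by blast
next
  case no_long_edge: False
  show ?thesis
  proof (cases "\<forall>v\<in>V. 3 \<le> degree E ends v")
    case True
    with no_long_edge show ?thesis
      by (intro reduced) (auto simp: not_less)
  next
    case False
    then obtain v where v: "v \<in> V" "degree E ends v < 3"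
      by (auto simp: not_le)
    show ?thesis
    proof (cases "card (incident E ends v) \<le> 1")
      case True
      with v(1) show ?thesis by (rule low_vertex)
    next
      case False
      with assms v(2) obtain e\<^sub>1 e\<^sub>2 u w where "incident E ends v = {e\<^sub>1, e\<^sub>2}" "e\<^sub>1 \<noteq> e\<^sub>2"
        "joins ends e\<^sub>1 v u" "u \<noteq> v" "joins ends e\<^sub>2 v w" "w \<noteq> v"
        by (elim path_vertex_if_degree_less_3) auto
      with v(1) show ?thesis by (rule path_vertex)
    qed
  qed
qed

lemma has_short_dense_subgraph_if_min_degree_three:
  assumes "multigraph V E ends" "V \<noteq> {}" "1 \<le> k" "\<forall>e\<in>E. l e \<le> k"
    and "\<forall>v\<in>V. 3 \<le> degree E ends v"
  shows "has_short_dense_subgraph V E ends l k"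
proof -
  obtain root where "root \<in> V"
    using assms(2) by blast
  then interpret min_degree_three V E ends root
    using assms by unfold_locales
  obtain S F r where S: "S \<subseteq> V" and F: "F \<subseteq> spanned_edges S E ends" "card F = card S + 1"
    and small: "card S \<le> 4 * r + 1" and r: "2 ^ r \<le> 2 * card V"
    by (rule exists_short_dense_subgraph)
  have "(\<Sum>e\<in>F. l e - 1) \<le> card F * (k - 1)"
    using sum_bounded_above[of F "\<lambda>e. l e - 1" "k - 1"] F(1) assms(4)
    by (force simp: spanned_edges_def)
  also have "\<dots> \<le> (4 * r + 2) * (k - 1)"
    using F(2) small by (intro mult_le_mono1) simp
  finally have "card S + (\<Sum>e\<in>F. l e - 1) \<le> (4 * r + 1) + (4 * r + 2) * (k - 1)"
    using small by linarith
  also have "\<dots> \<le> k * (4 * r + 2)"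
    using assms(3) by (cases k) (simp_all add: algebra_simps)
  finally show ?thesis
    unfolding has_short_dense_subgraph_def using S F(1) r \<open>card F = card S + 1\<close>
    by (intro exI[of _ S] exI[of _ F] exI[of _ r]) simp
qed

text \<open>Each reduction step keeps the graph dense, and a short dense subgraph of the
  reduced graph lifts back to one of the original graph.\<close>
lemma has_short_dense_subgraph_if_dense_weighted:
  assumes "1 \<le> k" "dense_weighted V E ends l k"
  shows "has_short_dense_subgraph V E ends l k"
  using assms(2)
proof (induction "card V + card E" arbitrary: V E ends l rule: less_induct)
  case less
  then have graph: "multigraph V E ends" and fin: "finite V" "finite E" and "V \<noteq> {}"
    by (auto simp: dense_weighted_def multigraph_def)
  from fin(2) show ?case
  proof (cases rule: reduction_cases[where k = k and l = l and V = V and ends = ends])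
    case (long_edge e)
    have "has_short_dense_subgraph V (E - {e}) ends l k"
      using less.hyps[OF _ dense_weighted_remove_edge[OF less.prems long_edge]]
        card_Diff1_less[OF fin(2) long_edge(1)] by simp
    then show ?thesis
      by (rule has_short_dense_subgraph_mono) (use fin in auto)
  next
    case (low_vertex v)
    have "card (V - {v}) < card V" "card (E - incident E ends v) \<le> card E"
      using card_Diff1_less[OF fin(1) low_vertex(1)] card_mono[OF fin(2)] by auto
    then have "has_short_dense_subgraph (V - {v}) (E - incident E ends v) ends l k"
      using less.hyps[OF _ dense_weighted_remove_vertex[OF less.prems low_vertex]] by simp
    then show ?thesis
      by (rule has_short_dense_subgraph_mono) (use fin in auto)
  next
    case (path_vertex v e\<^sub>1 e\<^sub>2 u w)
    have "e\<^sub>2 \<in> E"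
      using path_vertex(2) by (auto simp: incident_def)
    then have "card (V - {v}) + card (E - {e\<^sub>2}) < card V + card E"
      using fin path_vertex(1) by (meson add_strict_mono card_Diff1_less)
    then have "has_short_dense_subgraph (V - {v}) (E - {e\<^sub>2})
            (ends(e\<^sub>1 := (u, w))) (l(e\<^sub>1 := l e\<^sub>1 + l e\<^sub>2)) k"
      by (rule less.hyps[OF _ dense_weighted_suppress[OF less.prems path_vertex]])
    then show ?thesis
      by (rule has_short_dense_subgraph_unsuppress[OF less.prems path_vertex(1-4,6)])
  next
    case reduced
    with graph \<open>V \<noteq> {}\<close> assms(1) show ?thesis
      by (intro has_short_dense_subgraph_if_min_degree_three) auto
  qed
qed

lemma dense_weighted_unit_lengths:
  fixes \<epsilon> :: real
  assumes "\<epsilon> > 0" "multigraph V E ends" "V \<noteq> {}"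
    and "real (card E) \<ge> real (card V) * (1 + \<epsilon>)"
  shows "dense_weighted V E ends (\<lambda>_. 1) (nat \<lceil>1 / \<epsilon>\<rceil>)"
proof -
  define k where "k = nat \<lceil>1 / \<epsilon>\<rceil>"
  have "1 / \<epsilon> \<le> real k"
    unfolding k_def by linarith
  then have "1 \<le> real k * \<epsilon>"
    using assms(1) by (simp add: field_simps)
  then have "real (card V) \<le> real k * \<epsilon> * real (card V)"
    using mult_right_mono[of 1 "real k * \<epsilon>" "real (card V)"] by simp
  also have "real k * real (card V) + \<dots> \<le> real k * real (card E)"
    using mult_left_mono[OF assms(4), of "real k"] by (simp add: algebra_simps)
  finally have "(k + 1) * card V \<le> k * card E"
    by (simp add: algebra_simps flip: of_nat_mult of_nat_add of_nat_le_iff)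
  then show ?thesis
    unfolding k_def[symmetric] dense_weighted_def using assms(2,3) by (simp add: algebra_simps)
qed

lemma four_r_plus_two_le_log:
  fixes s r :: nat
  assumes "4 \<le> s" "2 ^ r \<le> 2 * s"
  shows "real (4 * r + 2) \<le> 8 * log 2 (real s)"
proof -
  have "(2::real) ^ r \<le> 2 * real s"
    using assms(2) by (metis of_nat_le_iff of_nat_mult of_nat_numeral of_nat_power)
  then have "log 2 (2 ^ r) \<le> log 2 (2 * real s)"
    using assms(1) by (subst log_le_cancel_iff) auto
  then have "real r \<le> 1 + log 2 (real s)"
    using assms(1) by (simp add: log_mult log_nat_power)
  moreover have "log 2 4 \<le> log 2 (real s)"
    using assms(1) by simp
  then have "2 \<le> log 2 (real s)"
    using log_nat_power[of 2 2 2] by simp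
  ultimately show ?thesis by simp
qed

lemma short_dense_subgraph_of_unit_lengths:
  assumes "1 \<le> k" "dense_weighted V E ends (\<lambda>_. 1) k" "4 \<le> card V"
  shows "\<exists>S\<subseteq>V. real (card S) \<le> 8 * log 2 (real (card V)) * real k \<and>
           card S + 1 \<le> card (spanned_edges S E ends)"
proof -
  obtain S F r where S: "S \<subseteq> V" "F \<subseteq> spanned_edges S E ends" "card S < card F"
    and small: "card S \<le> k * (4 * r + 2)" and r: "2 ^ r \<le> 2 * card V"
    using has_short_dense_subgraph_if_dense_weighted[OF assms(1,2)]
    unfolding has_short_dense_subgraph_def by auto
  have "real (card S) \<le> real k * real (4 * r + 2)"
    using small by (metis of_nat_le_iff of_nat_mult)
  also have "\<dots> \<le> real k * (8 * log 2 (real (card V)))"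
    using four_r_plus_two_le_log[OF assms(3) r] by (intro mult_left_mono) auto
  moreover have "card F \<le> card (spanned_edges S E ends)"
    using S(2) assms(2) by (intro card_mono) (auto simp: dense_weighted_def spanned_edges_def multigraph_def)
  ultimately show ?thesis
    using S by (intro exI[of _ S]) (auto simp: algebra_simps)
qed

theorem lemma3p1:
  fixes V :: "'v set" and E :: "'e set" and ends :: "'e \<Rightarrow> 'v \<times> 'v"
    and \<epsilon> :: real
  assumes "\<epsilon> > 0"
    and "multigraph V E ends"
    and "card V \<ge> 2"
    and "real (card E) \<ge> real (card V) * (1 + \<epsilon>)"
  shows "\<exists>S. S \<subseteq> V \<and>
           real (card S) \<le> 8 * log 2 (real (card V)) * real_of_int \<lceil>1 / \<epsilon>\<rceil> \<and>
           card (spanned_edges S E ends) \<ge> card S + 1"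
proof -
  define k where "k = nat \<lceil>1 / \<epsilon>\<rceil>"
  have k: "1 \<le> k" "real k = real_of_int \<lceil>1 / \<epsilon>\<rceil>"
    unfolding k_def using assms(1) by (simp_all add: Suc_le_eq)
  show ?thesis
  proof (cases "real (card V) \<le> 8 * log 2 (real (card V)) * real k")
    case True
    have "real (card V) < real (card V) * (1 + \<epsilon>)"
      using assms(1,3) by simp
    with assms(4) have "card V < card E"
      by linarith
    with True k(2) show ?thesis
      using spanned_edges_all[OF assms(2)] by (intro exI[of _ V]) auto
  next
    case False
    have "1 * 1 \<le> log 2 (real (card V)) * real k"
      using assms(3) k(1) by (intro mult_mono) (auto simp: le_log_iff)
    with False have "4 \<le> card V"
      by simp
    moreover have "dense_weighted V E ends (\<lambda>_. 1) k"
      unfolding k_def using dense_weighted_unit_lengths assms by fastforce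
    ultimately show ?thesis
      using short_dense_subgraph_of_unit_lengths[OF k(1)] k(2) by simp
  qed
qed

end
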